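(* For all $\lambda=(\lambda_i)_{i\in\mathbb Z},\ \mu=(\mu_i)_{i\in\mathbb Z}\in\mathbb N^n_\vartriangle$ one has $P_{\lambda,\mu}(v^2)=P'_{\lambda,\mu}(v^2)$, where $$P_{\lambda,\mu}(v^2)=\sum_{0\le\nu\le\lambda,\ \nu\in\mathbb N^n_\vartriangle} v^{2\sum_{i=1}^n\left(\frac{\nu_i^2-\nu_i}{2}+(\lambda_i-\nu_i)(\mu_i-\nu_{i-1})\right)}\prod_{i=1}^n(v^2-1)^{\nu_i}[\![\nu_i]\!]^!\left[\!\!\left[{\lambda_i\atop\nu_i}\right]\!\!\right]\left[\!\!\left[{\mu_{i+1}\atop\nu_i}\right]\!\!\right],$$ $$P'_{\lambda,\mu}(v^2)=\sum_{0\le\nu\le\lambda,\ \nu\in\mathbb N^n_\vartriangle} v^{2\sum_{i=1}^n\left(\frac{\nu_i^2-\nu_i}{2}+(\lambda_i-\nu_i)(\mu_{i+1}-\nu_{i+1})\right)}\prod_{i=1}^n(v^2-1)^{\nu_i}[\![\nu_i]\!]^!\left[\!\!\left[{\lambda_i\atop\nu_i}\right]\!\!\right]\left[\!\!\left[{\mu_i\atop\nu_i}\right]\!\!\right].$$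
   Context: $n\ge 2$ is fixed and $v$ is an indeterminate. $\mathbb N^n_\vartriangle$ is the set of sequences $\lambda=(\lambda_i)_{i\in\mathbb Z}$ of nonnegative integers with $\lambda_{i+n}=\lambda_i$ for all $i$ (so indices are read modulo $n$, e.g. $\nu_0=\nu_n$, $\mu_{n+1}=\mu_1$); $\nu\le\lambda$ means $\nu_i\le\lambda_i$ for all $i$. For integers $N\ge0$, $t\ge 0$: $[\![m]\!]=\frac{v^{2m}-1}{v^2-1}$, $[\![N]\!]^!=[\![1]\!][\![2]\!]\cdots[\![N]\!]$, and $\left[\!\left[{N\atop t}\right]\!\right]=\prod_{i=1}^t\frac{v^{2(N-i+1)}-1}{v^{2i}-1}$ (which is $0$ if $t>N$). The identity is an identity in $\mathbb Q(v)$. *)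

theory Defs
  imports Main "HOL-Computational_Algebra.Polynomial" "HOL-Computational_Algebra.Fraction_Field"
begin

definition qv :: "rat poly fract" where
  "qv = Fract [:0, 1:] 1"

definition qint :: "'a::field \<Rightarrow> nat \<Rightarrow> 'a" where
  "qint v m = (v ^ (2*m) - 1) / (v ^ 2 - 1)"

definition qfact :: "'a::field \<Rightarrow> nat \<Rightarrow> 'a" where
  "qfact v N = (\<Prod>m = 1..N. qint v m)"

text \<open>For i \<le> t the exponent N-i+1 is written N+1-i; only the factor i = N+1 (if t > N)
  can have N+1-i truncated, where it is 0 as in the paper.\<close>
definition qbinom :: "'a::field \<Rightarrow> nat \<Rightarrow> nat \<Rightarrow> 'a" where
  "qbinom v N t = (\<Prod>i = 1..t. (v ^ (2*(N + 1 - i)) - 1) / (v ^ (2*i) - 1))"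

definition periodic_seq :: "nat \<Rightarrow> (int \<Rightarrow> nat) \<Rightarrow> bool" where
  "periodic_seq n lam \<longleftrightarrow> (\<forall>i. lam (i + int n) = lam i)"

definition P_poly :: "nat \<Rightarrow> (int \<Rightarrow> nat) \<Rightarrow> (int \<Rightarrow> nat) \<Rightarrow> rat poly fract" where
  "P_poly n lam mu =
    (\<Sum>nu \<in> {nu. periodic_seq n nu \<and> (\<forall>i. nu i \<le> lam i)}.
       (qv ^ 2) powi (\<Sum>i = 1..int n.
           (int (nu i) ^ 2 - int (nu i)) div 2 + (int (lam i) - int (nu i)) * (int (mu i) - int (nu (i - 1))))
       * (\<Prod>i = 1..int n. (qv ^ 2 - 1) ^ nu i * qfact qv (nu i)
            * qbinom qv (lam i) (nu i) * qbinom qv (mu (i + 1)) (nu i)))"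

definition P'_poly :: "nat \<Rightarrow> (int \<Rightarrow> nat) \<Rightarrow> (int \<Rightarrow> nat) \<Rightarrow> rat poly fract" where
  "P'_poly n lam mu =
    (\<Sum>nu \<in> {nu. periodic_seq n nu \<and> (\<forall>i. nu i \<le> lam i)}.
       (qv ^ 2) powi (\<Sum>i = 1..int n.
           (int (nu i) ^ 2 - int (nu i)) div 2 + (int (lam i) - int (nu i)) * (int (mu (i + 1)) - int (nu (i + 1))))
       * (\<Prod>i = 1..int n. (qv ^ 2 - 1) ^ nu i * qfact qv (nu i)
            * qbinom qv (lam i) (nu i) * qbinom qv (mu i) (nu i)))"

end

theory Submission
  imports Defs "HOL-Library.FuncSet"
begin

text \<open>Write q = v^2. The q-binomial theorem, evaluated at x = q^b, gives
  q^(a b) = \<Sum>k. q^(k(k-1)/2) (q - 1)^k [[k]]! [[a, k]] [[b, k]].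
  Expanding every factor q^((\<lambda>_i - \<nu>_i)(\<mu>_i - \<nu>_(i-1))) of P in this way turns P into a double sum
  over \<nu>, \<rho> \<le> \<lambda>, and likewise for P' with the factors q^((\<lambda>_i - \<nu>_i)(\<mu>_(i+1) - \<nu>_(i+1))).
  The summand of P at (\<nu>, \<rho>) equals the summand of P' at (\<rho>, \<nu>): this follows from
  [[N, a]] [[N - a, b]] = [[N, b]] [[N - b, a]], applied to \<lambda>_i and to \<mu>_i, together with a cyclic
  shift of the index i, which is where periodicity enters.\<close>

definition qpoch :: "'a::field \<Rightarrow> nat \<Rightarrow> 'a" where
  "qpoch v N = (\<Prod>m = 1..N. v ^ (2*m) - 1)"

definition qfalling :: "'a::field \<Rightarrow> 'a \<Rightarrow> nat \<Rightarrow> 'a" where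
  "qfalling v x k = (\<Prod>j<k. x - (v^2) ^ j)"

definition qmult_term :: "'a::field \<Rightarrow> nat \<Rightarrow> nat \<Rightarrow> nat \<Rightarrow> 'a" where
  "qmult_term v a b k =
     (v^2) ^ (k * (k - 1) div 2) * ((v^2 - 1) ^ k * qfact v k * qbinom v a k * qbinom v b k)"

lemma qpoch_0 [simp]: "qpoch v 0 = 1"
  by (simp add: qpoch_def)

lemma qpoch_Suc: "qpoch v (Suc N) = qpoch v N * (v ^ (2 * Suc N) - 1)"
  by (simp add: qpoch_def prod.cl_ivl_Suc)

lemma qfact_0 [simp]: "qfact v 0 = 1"
  by (simp add: qfact_def)

lemma qfact_Suc: "qfact v (Suc k) = qfact v k * ((v ^ (2 * Suc k) - 1) / (v^2 - 1))"
  by (simp add: qfact_def qint_def prod.cl_ivl_Suc)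

lemma qbinom_0 [simp]: "qbinom v N 0 = 1"
  by (simp add: qbinom_def)

lemma qbinom_Suc: "qbinom v N (Suc k) = qbinom v N k * ((v ^ (2 * (N - k)) - 1) / (v ^ (2 * Suc k) - 1))"
  by (simp add: qbinom_def prod.cl_ivl_Suc)

lemma qbinom_eq_0: "N < k \<Longrightarrow> qbinom v N k = 0"
  unfolding qbinom_def by (auto intro!: bexI[where x = "N + 1"])

lemma qbinom_nonzero_imp_le: "qbinom v N k \<noteq> 0 \<Longrightarrow> k \<le> N"
  using qbinom_eq_0 not_le by blast

lemma qfalling_0 [simp]: "qfalling v x 0 = 1"
  by (simp add: qfalling_def)

lemma qfalling_Suc: "qfalling v x (Suc k) = qfalling v x k * (x - (v^2) ^ k)"
  by (simp add: qfalling_def)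

lemma qfalling_qpower_eq_0: "a < k \<Longrightarrow> qfalling v ((v^2) ^ a) k = 0"
  unfolding qfalling_def by (auto intro!: bexI[where x = a])

locale quantum_parameter =
  fixes v :: "'a::field"
  assumes nonzero: "v \<noteq> 0"
    and not_root_of_unity: "0 < m \<Longrightarrow> v ^ (2*m) \<noteq> 1"
begin

lemma power_minus_one_nonzero: "0 < m \<Longrightarrow> v ^ (2*m) - 1 \<noteq> 0"
  using not_root_of_unity by simp

lemma qpoch_nonzero: "qpoch v N \<noteq> 0"
  unfolding qpoch_def using not_root_of_unity by auto

lemma qbinom_mult_qpoch: "k \<le> N \<Longrightarrow> qbinom v N k * qpoch v k * qpoch v (N - k) = qpoch v N"
proof (induction k)
  case (Suc k)
  have N: "N - k = Suc (N - Suc k)" using Suc.prems by simp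
  have "qbinom v N (Suc k) * qpoch v (Suc k) * qpoch v (N - Suc k)
      = qbinom v N k * qpoch v k * (qpoch v (N - Suc k) * (v ^ (2 * (N - k)) - 1))"
    using power_minus_one_nonzero[of "Suc k"] by (simp add: qbinom_Suc qpoch_Suc field_simps)
  also have "qpoch v (N - Suc k) * (v ^ (2 * (N - k)) - 1) = qpoch v (N - k)"
    by (simp add: N qpoch_Suc)
  finally show ?case using Suc by simp
qed simp

lemma qbinom_eq_qpoch_div: "k \<le> N \<Longrightarrow> qbinom v N k = qpoch v N / (qpoch v k * qpoch v (N - k))"
  using qbinom_mult_qpoch[of k N] qpoch_nonzero by (simp add: field_simps)

lemma qbinom_self [simp]: "qbinom v N N = 1"
  using qbinom_eq_qpoch_div[of N N] qpoch_nonzero by simp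

lemma qbinom_mult_qbinom_diff: "qbinom v N a * qbinom v (N - a) b = qbinom v N b * qbinom v (N - b) a"
proof (cases "a + b \<le> N")
  case True
  have "N - a - b = N - b - a" by simp
  with True show ?thesis
    using qpoch_nonzero by (simp add: qbinom_eq_qpoch_div field_simps)
next
  case False
  then have "N < a \<or> N - a < b" "N < b \<or> N - b < a" by auto
  then show ?thesis by (auto simp: qbinom_eq_0)
qed

lemma qbinom_Suc_Suc: "qbinom v (Suc N) (Suc k) = qbinom v N k + (v^2) ^ Suc k * qbinom v N (Suc k)"
proof (cases "Suc k \<le> N")
  case True
  define d where "d = N - Suc k"
  define A B where "A = v ^ (2 * Suc k)" and "B = v ^ (2 * Suc d)"
  have N: "N = Suc k + d" using True by (simp add: d_def)
  have AB: "A - 1 \<noteq> 0" "B - 1 \<noteq> 0"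
    unfolding A_def B_def by (intro power_minus_one_nonzero zero_less_Suc)+
  have "v ^ (2 * Suc N) = A * B" "(v^2) ^ Suc k = A"
    by (simp_all add: A_def B_def N flip: power_add power_mult)
  then have qpochs: "qpoch v (Suc N) = qpoch v N * (A * B - 1)" "qpoch v (Suc k) = qpoch v k * (A - 1)"
      "qpoch v (N - k) = qpoch v d * (B - 1)" "Suc N - Suc k = N - k" "N - Suc k = d"
    by (simp_all add: qpoch_Suc A_def B_def N del: power_Suc)
  define D where "D = qpoch v k * (A - 1) * qpoch v d * (B - 1)"
  have "D \<noteq> 0" using AB qpoch_nonzero by (simp add: D_def)
  then have eqs: "qbinom v (Suc N) (Suc k) = qpoch v N * (A * B - 1) / D"
      "qbinom v N k = qpoch v N * (A - 1) / D"
      "qbinom v N (Suc k) = qpoch v N * (B - 1) / D"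
    using True AB qpoch_nonzero by (simp_all add: qbinom_eq_qpoch_div qpochs D_def field_simps)
  show ?thesis
    unfolding eqs \<open>(v^2) ^ Suc k = A\<close> using \<open>D \<noteq> 0\<close> by (simp add: field_simps)
next
  case False
  then show ?thesis by (cases "k = N") (simp_all add: qbinom_eq_0)
qed

theorem qbinomial_theorem: "b \<le> K \<Longrightarrow> (\<Sum>k\<le>K. qbinom v b k * qfalling v x k) = x ^ b"
proof (induction b arbitrary: K)
  case 0
  then show ?case by (cases K) (simp_all add: sum.atMost_Suc_shift qbinom_eq_0 del: sum.atMost_Suc)
next
  case (Suc b)
  then obtain K' where K: "K = Suc K'" and "b \<le> K'" by (cases K) auto
  let ?q = "v^2"
  have "(\<Sum>k\<le>Suc K'. ?q ^ k * qbinom v b k * qfalling v x k)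
      = 1 + (\<Sum>k\<le>K'. ?q ^ Suc k * qbinom v b (Suc k) * qfalling v x (Suc k))"
    by (subst sum.atMost_Suc_shift) simp
  moreover have "(\<Sum>k\<le>Suc K'. ?q ^ k * qbinom v b k * qfalling v x k)
      = (\<Sum>k\<le>K'. ?q ^ k * qbinom v b k * qfalling v x k)"
    using \<open>b \<le> K'\<close> by (simp add: qbinom_eq_0)
  ultimately have shifted: "(\<Sum>k\<le>K'. ?q ^ Suc k * qbinom v b (Suc k) * qfalling v x (Suc k))
      = (\<Sum>k\<le>K'. ?q ^ k * qbinom v b k * qfalling v x k) - 1"
    by (simp only: eq_diff_eq add.commute)
  have "(\<Sum>k\<le>K. qbinom v (Suc b) k * qfalling v x k)
      = 1 + (\<Sum>k\<le>K'. qbinom v b k * qfalling v x (Suc k))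
          + (\<Sum>k\<le>K'. ?q ^ Suc k * qbinom v b (Suc k) * qfalling v x (Suc k))"
    unfolding K by (simp add: sum.atMost_Suc_shift qbinom_Suc_Suc sum.distrib algebra_simps del: sum.atMost_Suc)
  also have "\<dots> = x * (\<Sum>k\<le>K'. qbinom v b k * qfalling v x k)"
    unfolding shifted by (simp add: qfalling_Suc sum_distrib_left algebra_simps flip: sum.distrib)
  also have "\<dots> = x ^ Suc b"
    using Suc.IH[OF \<open>b \<le> K'\<close>] by simp
  finally show ?case .
qed

lemma qfalling_qpower:
  "(v^2) ^ (k * (k - 1) div 2) * ((v^2 - 1) ^ k * qfact v k * qbinom v a k) = qfalling v ((v^2) ^ a) k"
proof (induction k)
  case (Suc k)
  define c d where "c = v ^ (2 * Suc k) - 1" and "d = v^2 - 1"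
  have "c \<noteq> 0" "d \<noteq> 0"
    using power_minus_one_nonzero[of "Suc k"] power_minus_one_nonzero[of 1] by (simp_all add: c_def d_def)
  have tri: "Suc k * (Suc k - 1) div 2 = k * (k - 1) div 2 + k"
    by (cases k) (simp_all add: algebra_simps)
  have Suc_eqs: "qfact v (Suc k) = qfact v k * (c / d)" "(v^2 - 1) ^ Suc k = (v^2 - 1) ^ k * d"
      "qbinom v a (Suc k) = qbinom v a k * ((v ^ (2 * (a - k)) - 1) / c)"
    by (simp_all add: qfact_Suc qbinom_Suc c_def d_def)
  have "(v^2) ^ (Suc k * (Suc k - 1) div 2) * ((v^2 - 1) ^ Suc k * qfact v (Suc k) * qbinom v a (Suc k))
      = (v^2) ^ (k * (k - 1) div 2) * ((v^2 - 1) ^ k * qfact v k * qbinom v a k) * ((v^2) ^ k * (v ^ (2 * (a - k)) - 1))"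
    unfolding tri Suc_eqs using \<open>c \<noteq> 0\<close> \<open>d \<noteq> 0\<close> by (simp add: power_add field_simps)
  also have "\<dots> = qfalling v ((v^2) ^ a) (Suc k)"
  proof (cases "k \<le> a")
    case True
    then have "(v^2) ^ k * v ^ (2 * (a - k)) = (v^2) ^ a"
      by (simp add: power_mult flip: power_add)
    then show ?thesis unfolding Suc.IH by (simp add: qfalling_Suc right_diff_distrib)
  qed (simp add: qfalling_qpower_eq_0)
  finally show ?case .
qed simp

lemma sum_qmult_term: "a \<le> K \<Longrightarrow> (\<Sum>k\<le>K. qmult_term v a b k) = (v^2) ^ (a * b)"
proof -
  assume "a \<le> K"
  have "qmult_term v a b k = qbinom v a k * qfalling v ((v^2) ^ b) k" for k
    by (simp add: qmult_term_def ac_simps flip: qfalling_qpower)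
  then show ?thesis
    using qbinomial_theorem[OF \<open>a \<le> K\<close>, of "(v^2) ^ b"] by (simp add: ac_simps flip: power_mult)
qed

end

definition period_rep :: "nat \<Rightarrow> int \<Rightarrow> int" where
  "period_rep n i = (i - 1) mod int n + 1"

lemma period_rep_mem: "0 < n \<Longrightarrow> period_rep n i \<in> {1..int n}"
  unfolding period_rep_def by (simp add: add1_zle_eq)

lemma period_rep_id: "i \<in> {1..int n} \<Longrightarrow> period_rep n i = i"
  by (simp add: period_rep_def)

lemma period_rep_add: "period_rep n (i + int n) = period_rep n i"
  using mod_add_self2[of "i - 1" "int n"] by (simp add: period_rep_def algebra_simps)

lemma periodic_period_rep:
  assumes periodic: "\<And>i. f (i + int n) = f i"
  shows "f (period_rep n i) = f i"
proof -
  have shift: "f (j + int n * k) = f j" for j k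
  proof (induction k rule: int_induct[where k = 0])
    case (step1 k)
    then show ?case using periodic[of "j + int n * k"] by (simp add: algebra_simps)
  next
    case (step2 k)
    then show ?case using periodic[of "j + int n * (k - 1)"] by (simp add: algebra_simps)
  qed simp
  have "period_rep n i = i + int n * - ((i - 1) div int n)"
    by (simp add: period_rep_def algebra_simps flip: minus_div_mult_eq_mod)
  then show ?thesis using shift[of i "- ((i - 1) div int n)"] by simp
qed

lemma periodic_forall:
  assumes "0 < n" and "\<And>i. P (i + int n) = P i" and "\<And>i. i \<in> {1..int n} \<Longrightarrow> P i"
  shows "P i"
  using assms periodic_period_rep[of P n i] period_rep_mem by metis

definition periodic_below :: "nat \<Rightarrow> (int \<Rightarrow> nat) \<Rightarrow> (int \<Rightarrow> nat) set" where
  "periodic_below n lam = {nu. periodic_seq n nu \<and> (\<forall>i. nu i \<le> lam i)}"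

lemma bij_betw_restrict_periodic_below:
  assumes "0 < n" and lam: "periodic_seq n lam"
  shows "bij_betw (\<lambda>nu. restrict nu {1..int n}) (periodic_below n lam) (PiE {1..int n} (\<lambda>i. {..lam i}))"
proof (rule bij_betw_imageI)
  show "inj_on (\<lambda>nu. restrict nu {1..int n}) (periodic_below n lam)"
  proof (rule inj_onI, rule ext)
    fix nu nu' i
    assume "nu \<in> periodic_below n lam" "nu' \<in> periodic_below n lam"
      and eq: "restrict nu {1..int n} = restrict nu' {1..int n}"
    then have "(nu (j + int n) = nu' (j + int n)) = (nu j = nu' j)" for j
      by (simp add: periodic_below_def periodic_seq_def)
    moreover have "nu j = nu' j" if "j \<in> {1..int n}" for j
      using fun_cong[OF eq, of j] that by simp
    ultimately show "nu i = nu' i"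
      using periodic_forall[OF \<open>0 < n\<close>, of "\<lambda>j. nu j = nu' j"] by blast
  qed
  show "(\<lambda>nu. restrict nu {1..int n}) ` periodic_below n lam = PiE {1..int n} (\<lambda>i. {..lam i})"
  proof (intro equalityI subsetI)
    fix g assume "g \<in> (\<lambda>nu. restrict nu {1..int n}) ` periodic_below n lam"
    then show "g \<in> PiE {1..int n} (\<lambda>i. {..lam i})"
      by (auto simp: periodic_below_def)
  next
    fix g assume g: "g \<in> PiE {1..int n} (\<lambda>i. {..lam i})"
    define nu where "nu i = g (period_rep n i)" for i
    have "nu i \<le> lam i" for i
      using PiE_mem[OF g period_rep_mem[OF \<open>0 < n\<close>, of i]] periodic_period_rep[of lam n i] lam
      by (simp add: nu_def periodic_seq_def)
    then have "nu \<in> periodic_below n lam"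
      by (simp add: periodic_below_def periodic_seq_def nu_def period_rep_add)
    moreover have "restrict nu {1..int n} = g"
      using g by (auto simp: nu_def period_rep_id PiE_def extensional_def)
    ultimately show "g \<in> (\<lambda>nu. restrict nu {1..int n}) ` periodic_below n lam"
      by blast
  qed
qed

lemma prod_sum_eq_sum_periodic_below:
  fixes f :: "int \<Rightarrow> nat \<Rightarrow> 'a::comm_semiring_1"
  assumes "0 < n" and "periodic_seq n lam"
  shows "(\<Prod>i = 1..int n. \<Sum>k\<le>lam i. f i k) = (\<Sum>nu\<in>periodic_below n lam. \<Prod>i = 1..int n. f i (nu i))"
proof -
  have "(\<Prod>i = 1..int n. \<Sum>k\<le>lam i. f i k) = (\<Sum>g\<in>PiE {1..int n} (\<lambda>i. {..lam i}). \<Prod>i = 1..int n. f i (g i))"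
    by (rule prod_sum_PiE) auto
  also have "\<dots> = (\<Sum>nu\<in>periodic_below n lam. \<Prod>i = 1..int n. f i (restrict nu {1..int n} i))"
    by (rule sum.reindex_bij_betw[OF bij_betw_restrict_periodic_below[OF assms], symmetric])
  also have "\<dots> = (\<Sum>nu\<in>periodic_below n lam. \<Prod>i = 1..int n. f i (nu i))"
    by (intro sum.cong prod.cong) auto
  finally show ?thesis .
qed

lemma prod_periodic_shift:
  fixes h :: "int \<Rightarrow> 'a::comm_monoid_mult"
  assumes "0 < n" and "\<And>i. h (i + int n) = h i"
  shows "(\<Prod>i = 1..int n. h (i + 1)) = (\<Prod>i = 1..int n. h i)"
proof -
  have "{2..int n + 1} = insert (int n + 1) {2..int n}" "{1..int n} = insert 1 {2..int n}"
    using \<open>0 < n\<close> by auto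
  moreover have "h (int n + 1) = h 1"
    using assms(2)[of 1] by (simp add: add.commute)
  moreover have "(\<Prod>i = 1..int n. h (i + 1)) = (\<Prod>i = 2..int n + 1. h i)"
    by (rule prod.reindex_bij_witness[where i = "\<lambda>i. i - 1" and j = "\<lambda>i. i + 1"]) auto
  ultimately show ?thesis by simp
qed

lemma power_int_sum:
  fixes x :: "'a::field"
  assumes "x \<noteq> 0"
  shows "x powi (\<Sum>i\<in>A. e i) = (\<Prod>i\<in>A. x powi e i)"
proof (cases "finite A")
  case True
  then show ?thesis by (induction A rule: finite_induct) (simp_all add: power_int_add assms)
qed simp

lemma prod_mult_cong_nonzero:
  fixes C F G :: "'b \<Rightarrow> 'a::field"
  assumes "finite I" and "\<forall>i\<in>I. C i \<noteq> 0 \<Longrightarrow> \<forall>i\<in>I. F i = G i"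
  shows "(\<Prod>i\<in>I. C i * F i) = (\<Prod>i\<in>I. C i * G i)"
proof (cases "\<forall>i\<in>I. C i \<noteq> 0")
  case False
  then have "(\<Prod>i\<in>I. C i * F i) = 0" "(\<Prod>i\<in>I. C i * G i) = 0"
    using \<open>finite I\<close> by auto
  then show ?thesis by simp
qed (use assms in \<open>auto intro: prod.cong\<close>)

lemma int_power2_minus_div2: "(int k ^ 2 - int k) div 2 = int (k * (k - 1) div 2)"
proof -
  have "int k ^ 2 - int k = int (k * (k - 1))"
    by (cases k) (simp_all add: power2_eq_square algebra_simps)
  then show ?thesis by (simp add: zdiv_int)
qed

lemma (in quantum_parameter) power_int_prod_eq_sum_qmult_terms:
  fixes C :: "int \<Rightarrow> 'a" and e :: "int \<Rightarrow> int" and t a b :: "int \<Rightarrow> nat"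
  assumes "0 < n" and "periodic_seq n lam"
    and exponents: "\<forall>j\<in>{1..int n}. C j \<noteq> 0 \<Longrightarrow> \<forall>i\<in>{1..int n}. e i = int (t i + a i * b i) \<and> a i \<le> lam i"
  shows "(v^2) powi (\<Sum>i = 1..int n. e i) * (\<Prod>i = 1..int n. C i)
       = (\<Sum>rho\<in>periodic_below n lam. \<Prod>i = 1..int n. C i * (v^2) ^ t i * qmult_term v (a i) (b i) (rho i))"
proof -
  have "(v^2) powi (\<Sum>i = 1..int n. e i) * (\<Prod>i = 1..int n. C i) = (\<Prod>i = 1..int n. C i * (v^2) powi e i)"
    using nonzero by (simp add: power_int_sum prod.distrib mult.commute)
  also have "\<dots> = (\<Prod>i = 1..int n. C i * ((v^2) ^ t i * (\<Sum>k\<le>lam i. qmult_term v (a i) (b i) k)))"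
  proof (rule prod_mult_cong_nonzero)
    assume "\<forall>j\<in>{1..int n}. C j \<noteq> 0"
    note exponents[OF this]
    show "\<forall>i\<in>{1..int n}. (v^2) powi e i = (v^2) ^ t i * (\<Sum>k\<le>lam i. qmult_term v (a i) (b i) k)"
    proof
      fix i assume "i \<in> {1..int n}"
      with \<open>\<forall>i\<in>{1..int n}. e i = int (t i + a i * b i) \<and> a i \<le> lam i\<close>
      have "e i = int (t i + a i * b i)" "a i \<le> lam i" by auto
      then show "(v^2) powi e i = (v^2) ^ t i * (\<Sum>k\<le>lam i. qmult_term v (a i) (b i) k)"
        by (simp only: power_int_of_nat power_add sum_qmult_term)
    qed
  qed simp
  also have "\<dots> = (\<Prod>i = 1..int n. \<Sum>k\<le>lam i. C i * (v^2) ^ t i * qmult_term v (a i) (b i) k)"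
    by (simp add: sum_distrib_left mult.assoc)
  also have "\<dots> = (\<Sum>rho\<in>periodic_below n lam. \<Prod>i = 1..int n. C i * (v^2) ^ t i * qmult_term v (a i) (b i) (rho i))"
    by (rule prod_sum_eq_sum_periodic_below) fact+
  finally show ?thesis .
qed

definition P_summand :: "'a::field \<Rightarrow> nat \<Rightarrow> (int \<Rightarrow> nat) \<Rightarrow> (int \<Rightarrow> nat) \<Rightarrow> (int \<Rightarrow> nat) \<Rightarrow> (int \<Rightarrow> nat) \<Rightarrow> 'a" where
  "P_summand v n lam mu nu rho =
    (\<Prod>i = 1..int n. (v^2 - 1) ^ nu i * qfact v (nu i) * qbinom v (lam i) (nu i) * qbinom v (mu (i + 1)) (nu i)
       * (v^2) ^ (nu i * (nu i - 1) div 2) * qmult_term v (lam i - nu i) (mu i - nu (i - 1)) (rho i))"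

definition P'_summand :: "'a::field \<Rightarrow> nat \<Rightarrow> (int \<Rightarrow> nat) \<Rightarrow> (int \<Rightarrow> nat) \<Rightarrow> (int \<Rightarrow> nat) \<Rightarrow> (int \<Rightarrow> nat) \<Rightarrow> 'a" where
  "P'_summand v n lam mu nu rho =
    (\<Prod>i = 1..int n. (v^2 - 1) ^ nu i * qfact v (nu i) * qbinom v (lam i) (nu i) * qbinom v (mu i) (nu i)
       * (v^2) ^ (nu i * (nu i - 1) div 2) * qmult_term v (lam i - nu i) (mu (i + 1) - nu (i + 1)) (rho i))"

lemma (in quantum_parameter) P_summand_eq_P'_summand_swap:
  assumes "0 < n" and mu: "periodic_seq n mu" and nu: "periodic_seq n nu" and rho: "periodic_seq n rho"
  shows "P_summand v n lam mu nu rho = P'_summand v n lam mu rho nu"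
proof -
  define g where "g k = (v^2) ^ (k * (k - 1) div 2) * ((v^2 - 1) ^ k * qfact v k)" for k
  define X where "X i = g (nu i) * g (rho i) * (qbinom v (lam i) (nu i) * qbinom v (lam i - nu i) (rho i))" for i
  define X' where "X' i = g (nu i) * g (rho i) * (qbinom v (lam i) (rho i) * qbinom v (lam i - rho i) (nu i))" for i
  define h where "h j = qbinom v (mu j) (nu (j - 1))" for j
  define h' where "h' j = qbinom v (mu j - rho j) (nu (j - 1))" for j
  have "h (j + int n) = h j" "h' (j + int n) = h' j" for j
    using mu rho nu[unfolded periodic_seq_def, rule_format, of "j - 1"]
    by (simp_all add: h_def h'_def periodic_seq_def algebra_simps)
  then have shift: "(\<Prod>i = 1..int n. h (i + 1)) = (\<Prod>i = 1..int n. h i)"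
      "(\<Prod>i = 1..int n. h' (i + 1)) = (\<Prod>i = 1..int n. h' i)"
    by (simp_all add: prod_periodic_shift \<open>0 < n\<close>)
  \<comment> \<open>After shifting h to index i, the trinomial identity turns h i \<cdot> [[\<mu>_i - \<nu>_(i-1), \<rho>_i]]
    into [[\<mu>_i, \<rho>_i]] \<cdot> h' i, and h' is shifted back.\<close>
  have "X i = X' i" for i
    by (simp add: X_def X'_def qbinom_mult_qbinom_diff)
  moreover have "h i * qbinom v (mu i - nu (i - 1)) (rho i) = qbinom v (mu i) (rho i) * h' i" for i
    by (simp add: h_def h'_def qbinom_mult_qbinom_diff)
  ultimately have "(\<Prod>i = 1..int n. X i * qbinom v (mu i - nu (i - 1)) (rho i)) * (\<Prod>i = 1..int n. h i)
      = (\<Prod>i = 1..int n. X' i * qbinom v (mu i) (rho i)) * (\<Prod>i = 1..int n. h' i)"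
    by (simp add: ac_simps flip: prod.distrib)
  moreover have "P_summand v n lam mu nu rho
      = (\<Prod>i = 1..int n. X i * qbinom v (mu i - nu (i - 1)) (rho i)) * (\<Prod>i = 1..int n. h (i + 1))"
    by (simp add: P_summand_def qmult_term_def X_def g_def h_def ac_simps flip: prod.distrib)
  moreover have "P'_summand v n lam mu rho nu
      = (\<Prod>i = 1..int n. X' i * qbinom v (mu i) (rho i)) * (\<Prod>i = 1..int n. h' (i + 1))"
    by (simp add: P'_summand_def qmult_term_def X'_def g_def h'_def ac_simps flip: prod.distrib)
  ultimately show ?thesis
    by (simp only: shift)
qed

lemma qv_power: "qv ^ k = Fract ([:0, 1:] ^ k) 1"
  by (induction k) (simp_all add: qv_def One_fract_def)

interpretation qv: quantum_parameter qv
proof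
  show "qv \<noteq> 0"
    by (simp add: qv_def Zero_fract_def eq_fract)
  fix m :: nat
  assume "0 < m"
  have "degree ([:0, 1::rat:] ^ (2*m)) = 2*m"
    by (simp add: degree_power_eq)
  then have "[:0, 1::rat:] ^ (2*m) \<noteq> 1"
    using \<open>0 < m\<close> by auto
  then show "qv ^ (2*m) \<noteq> 1"
    by (simp add: qv_power One_fract_def eq_fract)
qed

lemma P_poly_eq_double_sum:
  assumes "0 < n" and lam: "periodic_seq n lam" and mu: "periodic_seq n mu"
  shows "P_poly n lam mu
    = (\<Sum>nu\<in>periodic_below n lam. \<Sum>rho\<in>periodic_below n lam. P_summand qv n lam mu nu rho)"
  unfolding P_poly_def periodic_below_def[symmetric] P_summand_def
proof (intro sum.cong refl qv.power_int_prod_eq_sum_qmult_terms[OF \<open>0 < n\<close> lam])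
  fix nu assume "nu \<in> periodic_below n lam"
  then have nu: "periodic_seq n nu" and le: "\<And>i. nu i \<le> lam i"
    by (auto simp: periodic_below_def)
  \<comment> \<open>Unless the prefactor vanishes, its q-binomials force \<nu>_(i-1) \<le> \<mu>_i, so the integer exponent
    (\<lambda>_i - \<nu>_i)(\<mu>_i - \<nu>_(i-1)) agrees with its counterpart in truncated natural subtraction.\<close>
  assume "\<forall>j\<in>{1..int n}. (qv^2 - 1) ^ nu j * qfact qv (nu j) * qbinom qv (lam j) (nu j) * qbinom qv (mu (j + 1)) (nu j) \<noteq> 0"
  then have "j \<in> {1..int n} \<Longrightarrow> nu j \<le> mu (j + 1)" for j
    by (auto intro: qbinom_nonzero_imp_le)
  moreover have "nu (j + int n) \<le> mu (j + int n + 1) \<longleftrightarrow> nu j \<le> mu (j + 1)" for j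
    using nu mu[unfolded periodic_seq_def, rule_format, of "j + 1"] by (simp add: periodic_seq_def ac_simps)
  ultimately have "nu (i - 1) \<le> mu i" for i
    using periodic_forall[OF \<open>0 < n\<close>, of "\<lambda>j. nu j \<le> mu (j + 1)" "i - 1"] by simp
  then show "\<forall>i\<in>{1..int n}. (int (nu i) ^ 2 - int (nu i)) div 2 + (int (lam i) - int (nu i)) * (int (mu i) - int (nu (i - 1)))
      = int (nu i * (nu i - 1) div 2 + (lam i - nu i) * (mu i - nu (i - 1))) \<and> lam i - nu i \<le> lam i"
    using le by (simp add: int_power2_minus_div2 of_nat_diff)
qed

lemma P'_poly_eq_double_sum:
  assumes "0 < n" and lam: "periodic_seq n lam" and mu: "periodic_seq n mu"
  shows "P'_poly n lam mu
    = (\<Sum>nu\<in>periodic_below n lam. \<Sum>rho\<in>periodic_below n lam. P'_summand qv n lam mu nu rho)"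
  unfolding P'_poly_def periodic_below_def[symmetric] P'_summand_def
proof (intro sum.cong refl qv.power_int_prod_eq_sum_qmult_terms[OF \<open>0 < n\<close> lam])
  fix nu assume "nu \<in> periodic_below n lam"
  then have nu: "periodic_seq n nu" and le: "\<And>i. nu i \<le> lam i"
    by (auto simp: periodic_below_def)
  assume "\<forall>j\<in>{1..int n}. (qv^2 - 1) ^ nu j * qfact qv (nu j) * qbinom qv (lam j) (nu j) * qbinom qv (mu j) (nu j) \<noteq> 0"
  then have "j \<in> {1..int n} \<Longrightarrow> nu j \<le> mu j" for j
    by (auto intro: qbinom_nonzero_imp_le)
  then have "nu (i + 1) \<le> mu (i + 1)" for i
    using periodic_forall[OF \<open>0 < n\<close>, of "\<lambda>j. nu j \<le> mu j" "i + 1"] nu mu by (simp add: periodic_seq_def)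
  then show "\<forall>i\<in>{1..int n}. (int (nu i) ^ 2 - int (nu i)) div 2 + (int (lam i) - int (nu i)) * (int (mu (i + 1)) - int (nu (i + 1)))
      = int (nu i * (nu i - 1) div 2 + (lam i - nu i) * (mu (i + 1) - nu (i + 1))) \<and> lam i - nu i \<le> lam i"
    using le by (simp add: int_power2_minus_div2 of_nat_diff)
qed

theorem corollary3p9p6:
  fixes n :: nat and lam mu :: "int \<Rightarrow> nat"
  assumes "n \<ge> 2"
    and "periodic_seq n lam" and "periodic_seq n mu"
  shows "P_poly n lam mu = P'_poly n lam mu"
proof -
  have "0 < n" using assms(1) by simp
  have "P_poly n lam mu
      = (\<Sum>nu\<in>periodic_below n lam. \<Sum>rho\<in>periodic_below n lam. P_summand qv n lam mu nu rho)"
    using P_poly_eq_double_sum[OF \<open>0 < n\<close> assms(2,3)] .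
  also have "\<dots> = (\<Sum>nu\<in>periodic_below n lam. \<Sum>rho\<in>periodic_below n lam. P'_summand qv n lam mu rho nu)"
    using qv.P_summand_eq_P'_summand_swap[OF \<open>0 < n\<close> assms(3)]
    by (intro sum.cong refl) (simp add: periodic_below_def)
  also have "\<dots> = (\<Sum>rho\<in>periodic_below n lam. \<Sum>nu\<in>periodic_below n lam. P'_summand qv n lam mu rho nu)"
    by (rule sum.swap)
  also have "\<dots> = P'_poly n lam mu"
    using P'_poly_eq_double_sum[OF \<open>0 < n\<close> assms(2,3)] by simp
  finally show ?thesis .
qed

end
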